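(* Let $\Omega\subseteq\mathbb{R}^n$ ($n\ge 1$) be a bounded measurable set, $Y$ a Hilbert space, $S:L^2(\Omega)\to Y$ linear and continuous, $u_a,u_b\in L^\infty(\Omega)$ with $U_{\text{ad}}:=\{u\in L^2(\Omega):\ u_a\le u\le u_b \text{ a.e.}\}\neq\emptyset$, and let $(\alpha_k)_{k\ge1}$ be a uniformly bounded sequence of positive reals. Let $z,z^\delta\in Y$ with $\|z-z^\delta\|_Y\le\delta$, $\delta\ge 0$. Let $(u_k)_k$ and $(u_k^\delta)_k$ be the sequences generated by the Bregman iteration (described in the context) with data $z$ and $z^\delta$, respectively. Then for every $k\ge1$, $$\sum_{i=1}^k \frac{1}{\alpha_i}\|u_i^\delta-u_i\|_{L^2(\Omega)}^2\le \delta^2\sum_{i=1}^k\Big(\frac{1}{\alpha_i^2}+\gamma_{i-1}^2\Big),$$ where $\gamma_k:=\sum_{j=1}^k \frac{1}{\alpha_j}$ and $\gamma_0:=0$.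
   Context: Define $J:L^2(\Omega)\to\mathbb{R}\cup\{+\infty\}$ by $J(u)=\frac12\|u\|^2+I_{U_{\text{ad}}}(u)$, where $I_{U_{\text{ad}}}$ is the indicator function ($0$ on $U_{\text{ad}}$, $+\infty$ otherwise), and for $\lambda\in\partial J(v)$ the Bregman distance $D^\lambda(u,v):=J(u)-J(v)-(u-v,\lambda)_{L^2}$. The Bregman iteration with data $\zeta\in Y$ is: set $u_0=P_{U_{\text{ad}}}(0)$ (pointwise projection onto $[u_a,u_b]$), $\lambda_0=0\in\partial J(u_0)$; for $k=1,2,\dots$ let $u_k$ be the (unique) minimizer of $u\mapsto\frac12\|Su-\zeta\|_Y^2+\alpha_k D^{\lambda_{k-1}}(u,u_{k-1})$ over $L^2(\Omega)$, then set $\mu_k:=\sum_{i=1}^k\frac{1}{\alpha_i}(\zeta-Su_i)$ and $\lambda_k:=S^\ast\mu_k$. The sequence $(u_k^\delta)_k$ is obtained with $\zeta=z^\delta$ (with corresponding $\lambda_k^\delta$), and $(u_k)_k$ with $\zeta=z$. *)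

theory Defs
  imports "HOL-Analysis.Analysis"
begin

text \<open>Elements of L2(Omega) are represented by real functions on real^'n that are
  Lebesgue measurable on Omega and square integrable on Omega (equality a.e. is
  respected by all notions below).\<close>

definition L2 :: "(real^'n) set \<Rightarrow> (real^'n \<Rightarrow> real) set" where
  "L2 \<Omega> = {u. u \<in> borel_measurable (lebesgue_on \<Omega>) \<and>
                 integrable (lebesgue_on \<Omega>) (\<lambda>x. (u x)^2)}"

definition L2_inner :: "(real^'n) set \<Rightarrow> (real^'n \<Rightarrow> real) \<Rightarrow> (real^'n \<Rightarrow> real) \<Rightarrow> real" where
  "L2_inner \<Omega> u v = (LINT x|lebesgue_on \<Omega>. u x * v x)"

definition L2_norm :: "(real^'n) set \<Rightarrow> (real^'n \<Rightarrow> real) \<Rightarrow> real" where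
  "L2_norm \<Omega> u = sqrt (LINT x|lebesgue_on \<Omega>. (u x)^2)"

definition Linf :: "(real^'n) set \<Rightarrow> (real^'n \<Rightarrow> real) set" where
  "Linf \<Omega> = {u. u \<in> borel_measurable (lebesgue_on \<Omega>) \<and>
                 (\<exists>C. AE x in lebesgue_on \<Omega>. \<bar>u x\<bar> \<le> C)}"

definition Uad :: "(real^'n) set \<Rightarrow> (real^'n \<Rightarrow> real) \<Rightarrow> (real^'n \<Rightarrow> real) \<Rightarrow> (real^'n \<Rightarrow> real) set" where
  "Uad \<Omega> ua ub = {u \<in> L2 \<Omega>. AE x in lebesgue_on \<Omega>. ua x \<le> u x \<and> u x \<le> ub x}"

definition Jfun :: "(real^'n) set \<Rightarrow> (real^'n \<Rightarrow> real) \<Rightarrow> (real^'n \<Rightarrow> real) \<Rightarrow> (real^'n \<Rightarrow> real) \<Rightarrow> ereal" where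
  "Jfun \<Omega> ua ub u = (if u \<in> Uad \<Omega> ua ub then ereal ((L2_norm \<Omega> u)^2 / 2) else \<infinity>)"

definition bregman_dist :: "(real^'n) set \<Rightarrow> (real^'n \<Rightarrow> real) \<Rightarrow> (real^'n \<Rightarrow> real) \<Rightarrow>
    (real^'n \<Rightarrow> real) \<Rightarrow> (real^'n \<Rightarrow> real) \<Rightarrow> (real^'n \<Rightarrow> real) \<Rightarrow> ereal" where
  "bregman_dist \<Omega> ua ub lam u v =
     Jfun \<Omega> ua ub u - Jfun \<Omega> ua ub v - ereal (L2_inner \<Omega> (\<lambda>x. u x - v x) lam)"

text \<open>w is (a representative of) the adjoint S^* applied to mu.\<close>
definition is_adjoint_val :: "(real^'n) set \<Rightarrow> ((real^'n \<Rightarrow> real) \<Rightarrow> 'y::real_inner) \<Rightarrow> 'y \<Rightarrow> (real^'n \<Rightarrow> real) \<Rightarrow> bool" where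
  "is_adjoint_val \<Omega> S mu w \<longleftrightarrow> w \<in> L2 \<Omega> \<and> (\<forall>u \<in> L2 \<Omega>. L2_inner \<Omega> u w = inner (S u) mu)"

definition proj0 :: "(real^'n \<Rightarrow> real) \<Rightarrow> (real^'n \<Rightarrow> real) \<Rightarrow> (real^'n \<Rightarrow> real)" where
  "proj0 ua ub = (\<lambda>x. min (max 0 (ua x)) (ub x))"

definition mu_seq :: "((real^'n \<Rightarrow> real) \<Rightarrow> 'y::real_vector) \<Rightarrow> (nat \<Rightarrow> real) \<Rightarrow> 'y \<Rightarrow>
    (nat \<Rightarrow> (real^'n \<Rightarrow> real)) \<Rightarrow> nat \<Rightarrow> 'y" where
  "mu_seq S \<alpha> \<zeta> u k = (\<Sum>i\<in>{1..k}. (1 / \<alpha> i) *\<^sub>R (\<zeta> - S (u i)))"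

definition bregman_iteration :: "(real^'n) set \<Rightarrow> ((real^'n \<Rightarrow> real) \<Rightarrow> 'y::real_inner) \<Rightarrow>
    (real^'n \<Rightarrow> real) \<Rightarrow> (real^'n \<Rightarrow> real) \<Rightarrow> (nat \<Rightarrow> real) \<Rightarrow> 'y \<Rightarrow>
    (nat \<Rightarrow> (real^'n \<Rightarrow> real)) \<Rightarrow> (nat \<Rightarrow> (real^'n \<Rightarrow> real)) \<Rightarrow> bool" where
  "bregman_iteration \<Omega> S ua ub \<alpha> \<zeta> u lam \<longleftrightarrow>
     u 0 = proj0 ua ub \<and> lam 0 = (\<lambda>x. 0) \<and>
     (\<forall>k. is_adjoint_val \<Omega> S (mu_seq S \<alpha> \<zeta> u k) (lam k)) \<and>
     (\<forall>k\<ge>1. u k \<in> L2 \<Omega> \<and>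
        (\<forall>v \<in> L2 \<Omega>.
           ereal ((norm (S (u k) - \<zeta>))^2 / 2) + ereal (\<alpha> k) * bregman_dist \<Omega> ua ub (lam (k - 1)) (u k) (u (k - 1))
           \<le> ereal ((norm (S v - \<zeta>))^2 / 2) + ereal (\<alpha> k) * bregman_dist \<Omega> ua ub (lam (k - 1)) v (u (k - 1))))"

definition gamma_seq :: "(nat \<Rightarrow> real) \<Rightarrow> nat \<Rightarrow> real" where
  "gamma_seq \<alpha> k = (\<Sum>j\<in>{1..k}. 1 / \<alpha> j)"

end

theory Submission
  imports Defs
begin

text \<open>Every iterate \<open>u\<^sub>k\<close> lies in \<open>U\<^sub>a\<^sub>d\<close> and satisfies the variational inequality
  \<open>(S v - S u\<^sub>k, \<mu>\<^sub>k) \<le> (u\<^sub>k, v - u\<^sub>k)\<close> for all \<open>v \<in> U\<^sub>a\<^sub>d\<close>; it is obtained by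
  differentiating the Bregman functional along segments inside the convex set \<open>U\<^sub>a\<^sub>d\<close>.
  Testing the inequalities of the exact and the noisy iterate against each other gives
  \<open>\<parallel>u\<^sup>\<delta>\<^sub>i - u\<^sub>i\<parallel>\<^sup>2 \<le> (d\<^sub>i, \<mu>\<^sup>\<delta>\<^sub>i - \<mu>\<^sub>i)\<close> with \<open>d\<^sub>i = S u\<^sup>\<delta>\<^sub>i - S u\<^sub>i\<close>, and
  \<open>\<mu>\<^sup>\<delta>\<^sub>i - \<mu>\<^sub>i = \<gamma>\<^sub>i (z\<^sup>\<delta> - z) - \<Sum>\<^sub>j\<^sub>\<le>\<^sub>i d\<^sub>j/\<alpha>\<^sub>j\<close>.  After weighting by \<open>1/\<alpha>\<^sub>i\<close> and
  summing, the identity \<open>2 \<Sum>\<^sub>i (a\<^sub>i, \<Sum>\<^sub>j\<^sub>\<le>\<^sub>i a\<^sub>j) = \<parallel>\<Sum>\<^sub>i a\<^sub>i\<parallel>\<^sup>2 + \<Sum>\<^sub>i \<parallel>a\<^sub>i\<parallel>\<^sup>2\<close> for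
  \<open>a\<^sub>i = d\<^sub>i/\<alpha>\<^sub>i\<close> absorbs the cross terms, and Young's inequality bounds the rest by
  \<open>\<delta>\<^sup>2 \<gamma>\<^sub>i\<^sup>2/2 \<le> \<delta>\<^sup>2 (1/\<alpha>\<^sub>i\<^sup>2 + \<gamma>\<^sub>i\<^sub>-\<^sub>1\<^sup>2)\<close>.\<close>

lemma L2_integrable_mult:
  assumes "f \<in> L2 \<Omega>" "g \<in> L2 \<Omega>"
  shows "integrable (lebesgue_on \<Omega>) (\<lambda>x. f x * g x)"
proof (rule Bochner_Integration.integrable_bound[where f="\<lambda>x. (f x)^2 + (g x)^2"])
  show "integrable (lebesgue_on \<Omega>) (\<lambda>x. (f x)^2 + (g x)^2)"
    and "(\<lambda>x. f x * g x) \<in> borel_measurable (lebesgue_on \<Omega>)"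
    using assms by (auto simp: L2_def)
  have "norm (f x * g x) \<le> norm ((f x)^2 + (g x)^2)" for x
  proof -
    have "0 \<le> (\<bar>f x\<bar> - \<bar>g x\<bar>)^2" by simp
    moreover have "0 \<le> \<bar>f x\<bar> * \<bar>g x\<bar>" by simp
    ultimately show ?thesis by (simp add: abs_mult power2_eq_square algebra_simps; linarith)
  qed
  then show "AE x in lebesgue_on \<Omega>. norm (f x * g x) \<le> norm ((f x)^2 + (g x)^2)"
    by simp
qed

lemma L2_lincomb:
  assumes "f \<in> L2 \<Omega>" "g \<in> L2 \<Omega>"
  shows "(\<lambda>x. a * f x + b * g x) \<in> L2 \<Omega>"
proof -
  have "(\<lambda>x. (a * f x + b * g x)^2) = (\<lambda>x. a^2 * (f x)^2 + (2*a*b) * (f x * g x) + b^2 * (g x)^2)"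
    by (auto simp: power2_eq_square algebra_simps)
  then show ?thesis
    using assms L2_integrable_mult[OF assms] by (auto simp: L2_def)
qed

lemma L2_diff: "f \<in> L2 \<Omega> \<Longrightarrow> g \<in> L2 \<Omega> \<Longrightarrow> (\<lambda>x. f x - g x) \<in> L2 \<Omega>"
  using L2_lincomb[of f \<Omega> g 1 "-1"] by simp

lemma L2_add_cmult: "f \<in> L2 \<Omega> \<Longrightarrow> g \<in> L2 \<Omega> \<Longrightarrow> (\<lambda>x. f x + c * g x) \<in> L2 \<Omega>"
  using L2_lincomb[of f \<Omega> g 1 c] by simp

lemma L2_inner_lincomb_left:
  assumes "f \<in> L2 \<Omega>" "g \<in> L2 \<Omega>" "h \<in> L2 \<Omega>"
  shows "L2_inner \<Omega> (\<lambda>x. a * f x + b * g x) h = a * L2_inner \<Omega> f h + b * L2_inner \<Omega> g h"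
proof -
  have "(\<lambda>x. (a * f x + b * g x) * h x) = (\<lambda>x. a * (f x * h x) + b * (g x * h x))"
    by (auto simp: algebra_simps)
  then show ?thesis
    using L2_integrable_mult[OF assms(1,3)] L2_integrable_mult[OF assms(2,3)]
    by (simp add: L2_inner_def)
qed

lemma L2_inner_commute: "L2_inner \<Omega> f g = L2_inner \<Omega> g f"
  by (simp add: L2_inner_def mult.commute)

lemma L2_inner_diff_swap: "L2_inner \<Omega> f (\<lambda>x. g x - f x) = - L2_inner \<Omega> f (\<lambda>x. f x - g x)"
proof -
  have "(\<lambda>x. f x * (g x - f x)) = (\<lambda>x. - (f x * (f x - g x)))"
    by (auto simp: algebra_simps)
  then show ?thesis by (simp add: L2_inner_def)
qed

lemma L2_norm_power2: "(L2_norm \<Omega> u)^2 = L2_inner \<Omega> u u"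
  by (simp add: L2_norm_def L2_inner_def integral_nonneg_AE power2_eq_square)

definition L2_linear :: "(real^'n) set \<Rightarrow> ((real^'n \<Rightarrow> real) \<Rightarrow> 'y::real_vector) \<Rightarrow> bool" where
  "L2_linear \<Omega> S \<longleftrightarrow>
     (\<forall>v \<in> L2 \<Omega>. \<forall>w \<in> L2 \<Omega>. S (\<lambda>x. v x + w x) = S v + S w) \<and>
     (\<forall>c. \<forall>v \<in> L2 \<Omega>. S (\<lambda>x. c * v x) = c *\<^sub>R S v)"

lemma L2_linear_lincomb:
  assumes "L2_linear \<Omega> S" "f \<in> L2 \<Omega>" "g \<in> L2 \<Omega>"
  shows "S (\<lambda>x. a * f x + b * g x) = a *\<^sub>R S f + b *\<^sub>R S g"
proof -
  have "(\<lambda>x. a * f x) \<in> L2 \<Omega>" "(\<lambda>x. b * g x) \<in> L2 \<Omega>"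
    using L2_lincomb[of f \<Omega> f a 0] L2_lincomb[of g \<Omega> g b 0] assms by simp_all
  then show ?thesis using assms by (simp add: L2_linear_def)
qed

lemma L2_linear_diff:
  assumes "L2_linear \<Omega> S" "f \<in> L2 \<Omega>" "g \<in> L2 \<Omega>"
  shows "S (\<lambda>x. f x - g x) = S f - S g"
  using L2_linear_lincomb[OF assms, of 1 "-1"] by simp

lemma power2_norm_add_scaleR:
  fixes x d :: "'a::real_inner"
  shows "(norm (x + t *\<^sub>R d))^2 = (norm x)^2 + 2 * t * inner x d + t^2 * (norm d)^2"
proof -
  have "(norm (x + t *\<^sub>R d))^2 = inner (x + t *\<^sub>R d) (x + t *\<^sub>R d)"
    by (simp only: power2_norm_eq_inner)
  also have "\<dots> = inner x x + 2 * t * inner x d + t^2 * inner d d"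
    by (simp add: inner_add_left inner_add_right inner_commute power2_eq_square algebra_simps)
  finally show ?thesis by (simp only: power2_norm_eq_inner)
qed

lemma Uad_segment:
  assumes "u \<in> Uad \<Omega> ua ub" "v \<in> Uad \<Omega> ua ub" "0 \<le> t" "t \<le> 1"
  shows "(\<lambda>x. u x + t * (v x - u x)) \<in> Uad \<Omega> ua ub"
proof -
  have "AE x in lebesgue_on \<Omega>. ua x \<le> u x \<and> u x \<le> ub x"
    and "AE x in lebesgue_on \<Omega>. ua x \<le> v x \<and> v x \<le> ub x"
    using assms by (auto simp: Uad_def)
  then have "AE x in lebesgue_on \<Omega>. ua x \<le> u x + t * (v x - u x) \<and> u x + t * (v x - u x) \<le> ub x"
  proof eventually_elim
    case (elim x)
    have "u x + t * (v x - u x) = (1 - t) * u x + t * v x"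
      by (simp add: algebra_simps)
    moreover have "(1 - t) * ua x \<le> (1 - t) * u x" "t * ua x \<le> t * v x"
      and "(1 - t) * u x \<le> (1 - t) * ub x" "t * v x \<le> t * ub x"
      using elim assms by (auto intro: mult_left_mono)
    ultimately show ?case by (simp add: algebra_simps)
  qed
  moreover have "(\<lambda>x. u x + t * (v x - u x)) \<in> L2 \<Omega>"
    using assms by (intro L2_add_cmult L2_diff) (auto simp: Uad_def)
  ultimately show ?thesis by (simp add: Uad_def)
qed

lemma proj0_in_Uad:
  assumes "\<Omega> \<in> sets lebesgue" "bounded \<Omega>" "ua \<in> Linf \<Omega>" "ub \<in> Linf \<Omega>" "Uad \<Omega> ua ub \<noteq> {}"
  shows "proj0 ua ub \<in> Uad \<Omega> ua ub"
proof -
  interpret finite_measure "lebesgue_on \<Omega>"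
    using assms by (intro finite_measure_lebesgue_on bounded_set_imp_lmeasurable)
  obtain w where "w \<in> Uad \<Omega> ua ub" using assms by blast
  then have ab: "AE x in lebesgue_on \<Omega>. ua x \<le> ub x" by (auto simp: Uad_def elim: AE_mp)
  obtain Ca Cb where Ca: "AE x in lebesgue_on \<Omega>. \<bar>ua x\<bar> \<le> Ca"
    and Cb: "AE x in lebesgue_on \<Omega>. \<bar>ub x\<bar> \<le> Cb"
    using assms by (auto simp: Linf_def)
  have "ua \<in> borel_measurable (lebesgue_on \<Omega>)" "ub \<in> borel_measurable (lebesgue_on \<Omega>)"
    using assms by (auto simp: Linf_def)
  then have meas: "proj0 ua ub \<in> borel_measurable (lebesgue_on \<Omega>)"
    unfolding proj0_def by measurable
  have "AE x in lebesgue_on \<Omega>. norm ((proj0 ua ub x)^2) \<le> (Ca + Cb)^2"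
    using Ca Cb
  proof eventually_elim
    case (elim x)
    then have "\<bar>proj0 ua ub x\<bar> \<le> \<bar>Ca + Cb\<bar>" by (auto simp: proj0_def)
    then show ?case by (simp add: abs_le_square_iff)
  qed
  then have "integrable (lebesgue_on \<Omega>) (\<lambda>x. (proj0 ua ub x)^2)"
    using meas by (intro integrable_const_bound[where B="(Ca + Cb)^2"]) auto
  moreover have "AE x in lebesgue_on \<Omega>. ua x \<le> proj0 ua ub x \<and> proj0 ua ub x \<le> ub x"
    using ab by eventually_elim (auto simp: proj0_def)
  ultimately show ?thesis using meas by (simp add: Uad_def L2_def)
qed

lemma linear_coeff_nonneg_of_quadratic_nonneg:
  fixes A B :: real
  assumes "\<And>t. 0 < t \<Longrightarrow> t \<le> 1 \<Longrightarrow> 0 \<le> t * A + t^2 * B"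
  shows "0 \<le> A"
proof (rule ccontr)
  assume neg: "\<not> 0 \<le> A"
  define t where "t = min 1 (- A / (2 * \<bar>B\<bar> + 1))"
  have t: "0 < t" "t \<le> 1" using neg by (auto simp: t_def field_simps)
  have "t * \<bar>B\<bar> \<le> - A / 2"
    using neg by (auto simp: t_def min_def field_simps split: if_splits)
  moreover have "t * B \<le> t * \<bar>B\<bar>" using t by (simp add: mult_left_mono)
  ultimately have "A + t * B < 0" using neg by linarith
  then have "t * (A + t * B) < 0" using t by (simp add: mult_pos_neg)
  then have "t * A + t^2 * B < 0" by (simp add: power2_eq_square algebra_simps)
  then show False using assms t by (meson not_le)
qed

text \<open>The Bregman functional of the \<open>k\<close>-th step on \<open>U\<^sub>a\<^sub>d\<close>, where it is finite; \<open>a\<close> stands for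
  \<open>\<alpha>\<^sub>k\<close>, \<open>lp\<close> for \<open>\<lambda>\<^sub>k\<^sub>-\<^sub>1\<close> and \<open>up\<close> for \<open>u\<^sub>k\<^sub>-\<^sub>1\<close>.\<close>
definition bregman_objective :: "(real^'n) set \<Rightarrow> ((real^'n \<Rightarrow> real) \<Rightarrow> 'y::real_inner) \<Rightarrow> real \<Rightarrow> 'y \<Rightarrow>
    (real^'n \<Rightarrow> real) \<Rightarrow> (real^'n \<Rightarrow> real) \<Rightarrow> (real^'n \<Rightarrow> real) \<Rightarrow> real" where
  "bregman_objective \<Omega> S a \<zeta> lp up w =
     (norm (S w - \<zeta>))^2 / 2
     + a * ((L2_norm \<Omega> w)^2 / 2 - (L2_norm \<Omega> up)^2 / 2 - L2_inner \<Omega> (\<lambda>x. w x - up x) lp)"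

lemma bregman_objective_on_Uad:
  fixes S :: "(real^'n \<Rightarrow> real) \<Rightarrow> 'y::real_inner"
  assumes "w \<in> Uad \<Omega> ua ub" "up \<in> Uad \<Omega> ua ub"
  shows "ereal ((norm (S w - \<zeta>))^2 / 2) + ereal a * bregman_dist \<Omega> ua ub lp w up
           = ereal (bregman_objective \<Omega> S a \<zeta> lp up w)"
  using assms by (simp add: bregman_dist_def Jfun_def bregman_objective_def)

lemma bregman_objective_segment:
  assumes S: "L2_linear \<Omega> S" and L2: "w \<in> L2 \<Omega>" "h \<in> L2 \<Omega>" "up \<in> L2 \<Omega>" "lp \<in> L2 \<Omega>"
  shows "bregman_objective \<Omega> S a \<zeta> lp up (\<lambda>x. w x + t * h x)
           = bregman_objective \<Omega> S a \<zeta> lp up w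
             + t * (inner (S w - \<zeta>) (S h) + a * (L2_inner \<Omega> w h - L2_inner \<Omega> h lp))
             + t^2 * ((norm (S h))^2 + a * (L2_norm \<Omega> h)^2) / 2"
proof -
  have wh: "(\<lambda>x. w x + t * h x) \<in> L2 \<Omega>" using L2(1,2) by (rule L2_add_cmult)
  have "S (\<lambda>x. w x + t * h x) - \<zeta> = (S w - \<zeta>) + t *\<^sub>R S h"
    using L2_linear_lincomb[OF S L2(1,2), of 1 t] by simp
  then have res: "(norm (S (\<lambda>x. w x + t * h x) - \<zeta>))^2
      = (norm (S w - \<zeta>))^2 + 2 * t * inner (S w - \<zeta>) (S h) + t^2 * (norm (S h))^2"
    by (simp only: power2_norm_add_scaleR)
  have "L2_inner \<Omega> (\<lambda>x. w x + t * h x) (\<lambda>x. w x + t * h x)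
      = L2_inner \<Omega> w (\<lambda>x. w x + t * h x) + t * L2_inner \<Omega> h (\<lambda>x. w x + t * h x)"
    using L2_inner_lincomb_left[OF L2(1,2) wh, of 1 t] by simp
  also have "\<dots> = L2_inner \<Omega> w w + 2 * t * L2_inner \<Omega> w h + t^2 * L2_inner \<Omega> h h"
    using L2_inner_lincomb_left[OF L2(1,2) L2(1), of 1 t] L2_inner_lincomb_left[OF L2(1,2) L2(2), of 1 t]
    by (simp add: L2_inner_commute[of \<Omega> _ "\<lambda>x. w x + t * h x"] L2_inner_commute[of \<Omega> h w]
        power2_eq_square algebra_simps)
  finally have norm: "(L2_norm \<Omega> (\<lambda>x. w x + t * h x))^2
      = (L2_norm \<Omega> w)^2 + 2 * t * L2_inner \<Omega> w h + t^2 * (L2_norm \<Omega> h)^2"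
    by (simp add: L2_norm_power2)
  have "L2_inner \<Omega> (\<lambda>x. 1 * (w x - up x) + t * h x) lp
      = L2_inner \<Omega> (\<lambda>x. w x - up x) lp + t * L2_inner \<Omega> h lp"
    using L2_inner_lincomb_left[OF L2_diff[OF L2(1,3)] L2(2,4), of 1 t] by simp
  then have shift: "L2_inner \<Omega> (\<lambda>x. w x + t * h x - up x) lp
      = L2_inner \<Omega> (\<lambda>x. w x - up x) lp + t * L2_inner \<Omega> h lp"
    by (simp add: algebra_simps)
  show ?thesis
    unfolding bregman_objective_def res norm shift by (simp add: power2_eq_square field_simps)
qed

lemma bregman_step_in_Uad:
  fixes S :: "(real^'n \<Rightarrow> real) \<Rightarrow> 'y::real_inner"
  assumes "a > 0" "up \<in> Uad \<Omega> ua ub"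
    and min: "\<forall>v \<in> L2 \<Omega>.
           ereal ((norm (S uk - \<zeta>))^2 / 2) + ereal a * bregman_dist \<Omega> ua ub lp uk up
           \<le> ereal ((norm (S v - \<zeta>))^2 / 2) + ereal a * bregman_dist \<Omega> ua ub lp v up"
  shows "uk \<in> Uad \<Omega> ua ub"
proof (rule ccontr)
  assume "uk \<notin> Uad \<Omega> ua ub"
  then have infinite: "ereal ((norm (S uk - \<zeta>))^2 / 2) + ereal a * bregman_dist \<Omega> ua ub lp uk up = \<infinity>"
    using assms by (simp add: bregman_dist_def Jfun_def)
  have "up \<in> L2 \<Omega>" using assms by (simp add: Uad_def)
  then have "ereal ((norm (S uk - \<zeta>))^2 / 2) + ereal a * bregman_dist \<Omega> ua ub lp uk up
      \<le> ereal (bregman_objective \<Omega> S a \<zeta> lp up up)"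
    using min bregman_objective_on_Uad[OF assms(2,2)] by metis
  then show False unfolding infinite by simp
qed

lemma bregman_step_variational_inequality:
  assumes S: "L2_linear \<Omega> S" and "a > 0"
    and uk: "uk \<in> Uad \<Omega> ua ub" and up: "up \<in> Uad \<Omega> ua ub" and lp: "lp \<in> L2 \<Omega>"
    and v: "v \<in> Uad \<Omega> ua ub"
    and min: "\<forall>v \<in> L2 \<Omega>.
           ereal ((norm (S uk - \<zeta>))^2 / 2) + ereal a * bregman_dist \<Omega> ua ub lp uk up
           \<le> ereal ((norm (S v - \<zeta>))^2 / 2) + ereal a * bregman_dist \<Omega> ua ub lp v up"
  shows "0 \<le> inner (S uk - \<zeta>) (S v - S uk)
            + a * (L2_inner \<Omega> uk (\<lambda>x. v x - uk x) - L2_inner \<Omega> (\<lambda>x. v x - uk x) lp)"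
proof -
  define h where "h = (\<lambda>x. v x - uk x)"
  have L2: "uk \<in> L2 \<Omega>" "v \<in> L2 \<Omega>" "up \<in> L2 \<Omega>" using uk v up by (auto simp: Uad_def)
  have h: "h \<in> L2 \<Omega>" unfolding h_def using L2 by (intro L2_diff)
  have Sh: "S h = S v - S uk" unfolding h_def using S L2 by (intro L2_linear_diff)
  have "0 \<le> inner (S uk - \<zeta>) (S h) + a * (L2_inner \<Omega> uk h - L2_inner \<Omega> h lp)"
  proof (rule linear_coeff_nonneg_of_quadratic_nonneg)
    fix t :: real assume t: "0 < t" "t \<le> 1"
    have w: "(\<lambda>x. uk x + t * h x) \<in> Uad \<Omega> ua ub"
      unfolding h_def using Uad_segment[OF uk v] t by simp
    then have "ereal (bregman_objective \<Omega> S a \<zeta> lp up uk)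
        \<le> ereal (bregman_objective \<Omega> S a \<zeta> lp up (\<lambda>x. uk x + t * h x))"
      using bspec[OF min, of "\<lambda>x. uk x + t * h x"]
      unfolding bregman_objective_on_Uad[OF uk up] bregman_objective_on_Uad[OF w up]
      by (simp add: Uad_def)
    then show "0 \<le> t * (inner (S uk - \<zeta>) (S h) + a * (L2_inner \<Omega> uk h - L2_inner \<Omega> h lp))
                   + t^2 * (((norm (S h))^2 + a * (L2_norm \<Omega> h)^2) / 2)"
      unfolding bregman_objective_segment[OF S L2(1) h L2(3) lp] by simp
  qed
  then show ?thesis unfolding h_def[symmetric] Sh[symmetric] .
qed

lemma bregman_iteration_step:
  assumes "bregman_iteration \<Omega> S ua ub \<alpha> \<zeta> u lam"
  shows "\<forall>v \<in> L2 \<Omega>.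
           ereal ((norm (S (u (Suc m)) - \<zeta>))^2 / 2)
             + ereal (\<alpha> (Suc m)) * bregman_dist \<Omega> ua ub (lam m) (u (Suc m)) (u m)
           \<le> ereal ((norm (S v - \<zeta>))^2 / 2)
             + ereal (\<alpha> (Suc m)) * bregman_dist \<Omega> ua ub (lam m) v (u m)"
  using assms unfolding bregman_iteration_def
  by (metis diff_Suc_1 le_add1 plus_1_eq_Suc)

lemma bregman_iteration_in_Uad:
  assumes "\<Omega> \<in> sets lebesgue" "bounded \<Omega>" "ua \<in> Linf \<Omega>" "ub \<in> Linf \<Omega>" "Uad \<Omega> ua ub \<noteq> {}"
    and \<alpha>_pos: "\<And>i. i \<ge> 1 \<Longrightarrow> \<alpha> i > 0"
    and iter: "bregman_iteration \<Omega> S ua ub \<alpha> \<zeta> u lam"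
  shows "u k \<in> Uad \<Omega> ua ub"
proof (induction k)
  case 0
  show ?case using proj0_in_Uad[OF assms(1-5)] iter by (simp add: bregman_iteration_def)
next
  case (Suc m)
  show ?case
    using bregman_step_in_Uad[OF _ Suc bregman_iteration_step[OF iter]] \<alpha>_pos by simp
qed

text \<open>The iterate \<open>u\<^sub>k\<close> is the projection of \<open>\<lambda>\<^sub>k = S\<^sup>* \<mu>\<^sub>k\<close> onto \<open>U\<^sub>a\<^sub>d\<close>.\<close>
lemma bregman_iteration_variational_inequality:
  assumes S: "L2_linear \<Omega> S"
    and "\<Omega> \<in> sets lebesgue" "bounded \<Omega>" "ua \<in> Linf \<Omega>" "ub \<in> Linf \<Omega>" "Uad \<Omega> ua ub \<noteq> {}"
    and \<alpha>_pos: "\<And>i. i \<ge> 1 \<Longrightarrow> \<alpha> i > 0"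
    and iter: "bregman_iteration \<Omega> S ua ub \<alpha> \<zeta> u lam"
    and k: "k \<ge> 1" and v: "v \<in> Uad \<Omega> ua ub"
  shows "inner (S v - S (u k)) (mu_seq S \<alpha> \<zeta> u k) \<le> L2_inner \<Omega> (u k) (\<lambda>x. v x - u k x)"
proof -
  obtain m where m: "k = Suc m" using k by (cases k) auto
  define a where "a = \<alpha> k"
  have a: "a > 0" using \<alpha>_pos k by (simp add: a_def)
  have U: "\<And>j. u j \<in> Uad \<Omega> ua ub"
    using bregman_iteration_in_Uad[OF assms(2-7) iter] .
  have adj: "\<And>j. is_adjoint_val \<Omega> S (mu_seq S \<alpha> \<zeta> u j) (lam j)"
    using iter by (simp add: bregman_iteration_def)
  have L2: "v \<in> L2 \<Omega>" "u k \<in> L2 \<Omega>" using U v by (auto simp: Uad_def)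
  have adj_m: "L2_inner \<Omega> (\<lambda>x. v x - u k x) (lam m) = inner (S v - S (u k)) (mu_seq S \<alpha> \<zeta> u m)"
    using adj[of m] L2_diff[OF L2] L2_linear_diff[OF S L2] by (simp add: is_adjoint_val_def)
  have opt: "0 \<le> inner (S (u k) - \<zeta>) (S v - S (u k))
      + a * (L2_inner \<Omega> (u k) (\<lambda>x. v x - u k x) - L2_inner \<Omega> (\<lambda>x. v x - u k x) (lam m))"
    using bregman_step_variational_inequality[OF S _ U U _ v bregman_iteration_step[OF iter]]
      a adj[of m] unfolding m a_def by (simp add: is_adjoint_val_def)
  have mu: "mu_seq S \<alpha> \<zeta> u k = mu_seq S \<alpha> \<zeta> u m + (1 / a) *\<^sub>R (\<zeta> - S (u k))"
    unfolding m a_def mu_seq_def by simp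
  have "inner (S v - S (u k)) (mu_seq S \<alpha> \<zeta> u k)
      = inner (S v - S (u k)) (mu_seq S \<alpha> \<zeta> u m) - inner (S (u k) - \<zeta>) (S v - S (u k)) / a"
    unfolding mu using a
    by (simp add: inner_add_right inner_diff_right inner_diff_left inner_commute field_simps)
  also have "\<dots> \<le> L2_inner \<Omega> (u k) (\<lambda>x. v x - u k x)"
    using opt adj_m a by (simp add: field_simps)
  finally show ?thesis .
qed

lemma variational_inequalities_error_bound:
  assumes "u \<in> L2 \<Omega>" "u' \<in> L2 \<Omega>"
    and "inner (S u' - S u) \<mu> \<le> L2_inner \<Omega> u (\<lambda>x. u' x - u x)"
    and "inner (S u - S u') \<mu>' \<le> L2_inner \<Omega> u' (\<lambda>x. u x - u' x)"
  shows "(L2_norm \<Omega> (\<lambda>x. u' x - u x))^2 \<le> inner (S u' - S u) (\<mu>' - \<mu>)"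
proof -
  have "(L2_norm \<Omega> (\<lambda>x. u' x - u x))^2 = L2_inner \<Omega> u' (\<lambda>x. u' x - u x) - L2_inner \<Omega> u (\<lambda>x. u' x - u x)"
    using L2_inner_lincomb_left[OF assms(2,1) L2_diff[OF assms(2,1)], of 1 "-1"]
    by (simp add: L2_norm_power2)
  also have "\<dots> = - L2_inner \<Omega> u' (\<lambda>x. u x - u' x) - L2_inner \<Omega> u (\<lambda>x. u' x - u x)"
    by (simp add: L2_inner_diff_swap[of \<Omega> u' u])
  also have "\<dots> \<le> inner (S u' - S u) (\<mu>' - \<mu>)"
    using assms(3,4) by (simp add: inner_diff_right inner_diff_left)
  finally show ?thesis .
qed

lemma mu_seq_diff:
  "mu_seq S \<alpha> z\<delta> u\<delta> i - mu_seq S \<alpha> z u i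
     = gamma_seq \<alpha> i *\<^sub>R (z\<delta> - z) - (\<Sum>j\<in>{1..i}. (1 / \<alpha> j) *\<^sub>R (S (u\<delta> j) - S (u j)))"
  by (simp add: mu_seq_def gamma_seq_def scaleR_sum_left algebra_simps
      flip: sum_subtractf sum.distrib)

lemma sum_inner_partial_sums:
  fixes a :: "nat \<Rightarrow> 'a::real_inner"
  shows "2 * (\<Sum>i\<in>{1..k}. inner (a i) (\<Sum>j\<in>{1..i}. a j))
           = (norm (\<Sum>j\<in>{1..k}. a j))^2 + (\<Sum>i\<in>{1..k}. (norm (a i))^2)"
proof (induction k)
  case 0
  show ?case by simp
next
  case (Suc k)
  have "inner (a (Suc k)) ((\<Sum>j\<in>{1..k}. a j) + a (Suc k))
      = inner (\<Sum>j\<in>{1..k}. a j) (a (Suc k)) + (norm (a (Suc k)))^2"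
    by (simp add: inner_add_right inner_commute power2_norm_eq_inner)
  then show ?case
    using Suc power2_norm_add_scaleR[of "\<Sum>j\<in>{1..k}. a j" 1 "a (Suc k)"] by simp
qed

lemma young_gamma_bound:
  fixes g c \<delta> n :: real
  shows "(g + c) * \<delta> * n - n^2 / 2 \<le> \<delta>^2 * (c^2 + g^2)"
proof -
  have "0 \<le> ((g + c) * \<delta> - n)^2 + (\<delta> * (g - c))^2" by simp
  then show ?thesis by (simp add: power2_eq_square algebra_simps)
qed

lemma weighted_error_sum_bound:
  fixes d :: "nat \<Rightarrow> 'a::real_inner"
  assumes \<alpha>_pos: "\<And>i. i \<ge> 1 \<Longrightarrow> \<alpha> i > 0" and \<eta>: "norm \<eta> \<le> \<delta>"
    and E: "\<And>i. i \<in> {1..k} \<Longrightarrow>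
              E i \<le> inner (d i) (gamma_seq \<alpha> i *\<^sub>R \<eta> - (\<Sum>j\<in>{1..i}. (1 / \<alpha> j) *\<^sub>R d j))"
  shows "(\<Sum>i\<in>{1..k}. (1 / \<alpha> i) * E i) \<le> \<delta>^2 * (\<Sum>i\<in>{1..k}. 1 / (\<alpha> i)^2 + (gamma_seq \<alpha> (i - 1))^2)"
proof -
  define a where "a i = (1 / \<alpha> i) *\<^sub>R d i" for i
  define A where "A i = (\<Sum>j\<in>{1..i}. a j)" for i
  have weighted_term: "(1 / \<alpha> i) * E i \<le> gamma_seq \<alpha> i * \<delta> * norm (a i) - inner (a i) (A i)"
    if i: "i \<in> {1..k}" for i
  proof -
    have "0 \<le> gamma_seq \<alpha> i"
      unfolding gamma_seq_def using \<alpha>_pos by (intro sum_nonneg) (simp add: less_imp_le)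
    moreover have "inner (a i) \<eta> \<le> norm (a i) * \<delta>"
      using norm_cauchy_schwarz[of "a i" \<eta>] mult_left_mono[OF \<eta> norm_ge_zero[of "a i"]]
      by linarith
    moreover have "1 / \<alpha> i > 0" using \<alpha>_pos i by simp
    ultimately show ?thesis
      using mult_left_mono[OF E[OF i], of "1 / \<alpha> i"]
        mult_left_mono[of "inner (a i) \<eta>" "norm (a i) * \<delta>" "gamma_seq \<alpha> i"]
      by (simp add: a_def A_def inner_diff_right algebra_simps)
  qed
  have "(\<Sum>i\<in>{1..k}. (1 / \<alpha> i) * E i)
      \<le> (\<Sum>i\<in>{1..k}. gamma_seq \<alpha> i * \<delta> * norm (a i) - inner (a i) (A i))"
    by (rule sum_mono) (rule weighted_term)
  also have "\<dots> = (\<Sum>i\<in>{1..k}. gamma_seq \<alpha> i * \<delta> * norm (a i)) - (\<Sum>i\<in>{1..k}. inner (a i) (A i))"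
    by (rule sum_subtractf)
  also have "\<dots> \<le> (\<Sum>i\<in>{1..k}. gamma_seq \<alpha> i * \<delta> * norm (a i)) - (\<Sum>i\<in>{1..k}. (norm (a i))^2) / 2"
    using sum_inner_partial_sums[of a k] zero_le_power2[of "norm (A k)"] unfolding A_def by linarith
  also have "\<dots> = (\<Sum>i\<in>{1..k}. gamma_seq \<alpha> i * \<delta> * norm (a i) - (norm (a i))^2 / 2)"
    by (simp add: sum_subtractf sum_divide_distrib)
  also have "\<dots> \<le> (\<Sum>i\<in>{1..k}. \<delta>^2 * (1 / (\<alpha> i)^2 + (gamma_seq \<alpha> (i - 1))^2))"
  proof (rule sum_mono)
    fix i assume "i \<in> {1..k}"
    then have "gamma_seq \<alpha> i = gamma_seq \<alpha> (i - 1) + 1 / \<alpha> i"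
      by (cases i) (auto simp: gamma_seq_def)
    then show "gamma_seq \<alpha> i * \<delta> * norm (a i) - (norm (a i))^2 / 2
        \<le> \<delta>^2 * (1 / (\<alpha> i)^2 + (gamma_seq \<alpha> (i - 1))^2)"
      using young_gamma_bound[of "gamma_seq \<alpha> (i - 1)" "1 / \<alpha> i" \<delta> "norm (a i)"]
      by (simp add: power_one_over)
  qed
  finally show ?thesis by (simp add: sum_distrib_left)
qed

theorem mainTheorem1:
  fixes \<Omega> :: "(real^'n) set"
    and S :: "(real^'n \<Rightarrow> real) \<Rightarrow> 'y::{real_inner, complete_space}"
    and ua ub :: "real^'n \<Rightarrow> real"
    and \<alpha> :: "nat \<Rightarrow> real"
    and z z\<delta> :: 'y
    and \<delta> :: real
    and u u\<delta> lam lam\<delta> :: "nat \<Rightarrow> (real^'n \<Rightarrow> real)"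
    and k :: nat
  assumes \<Omega>_meas: "\<Omega> \<in> sets lebesgue" and \<Omega>_bdd: "bounded \<Omega>"
    and S_add: "\<And>v w. v \<in> L2 \<Omega> \<Longrightarrow> w \<in> L2 \<Omega> \<Longrightarrow> S (\<lambda>x. v x + w x) = S v + S w"
    and S_scale: "\<And>c v. v \<in> L2 \<Omega> \<Longrightarrow> S (\<lambda>x. c * v x) = c *\<^sub>R S v"
    and S_cont: "\<exists>C. \<forall>v \<in> L2 \<Omega>. norm (S v) \<le> C * L2_norm \<Omega> v"
    and ua: "ua \<in> Linf \<Omega>" and ub: "ub \<in> Linf \<Omega>"
    and Uad_ne: "Uad \<Omega> ua ub \<noteq> {}"
    and \<alpha>_pos: "\<And>i. i \<ge> 1 \<Longrightarrow> \<alpha> i > 0"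
    and \<alpha>_bdd: "\<exists>C. \<forall>i\<ge>1. \<alpha> i \<le> C"
    and \<delta>_nonneg: "\<delta> \<ge> 0"
    and noise: "norm (z - z\<delta>) \<le> \<delta>"
    and iter: "bregman_iteration \<Omega> S ua ub \<alpha> z u lam"
    and iter\<delta>: "bregman_iteration \<Omega> S ua ub \<alpha> z\<delta> u\<delta> lam\<delta>"
    and k: "k \<ge> 1"
  shows "(\<Sum>i\<in>{1..k}. (1 / \<alpha> i) * (L2_norm \<Omega> (\<lambda>x. u\<delta> i x - u i x))^2)
           \<le> \<delta>^2 * (\<Sum>i\<in>{1..k}. 1 / (\<alpha> i)^2 + (gamma_seq \<alpha> (i - 1))^2)"
proof (rule weighted_error_sum_bound[OF \<alpha>_pos])
  have S: "L2_linear \<Omega> S" using S_add S_scale by (simp add: L2_linear_def)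
  note setting = \<Omega>_meas \<Omega>_bdd ua ub Uad_ne \<alpha>_pos
  show "norm (z\<delta> - z) \<le> \<delta>" using noise by (simp add: norm_minus_commute)
  fix i assume "i \<in> {1..k}"
  then have i: "i \<ge> 1" by simp
  have U: "u i \<in> Uad \<Omega> ua ub" "u\<delta> i \<in> Uad \<Omega> ua ub"
    using bregman_iteration_in_Uad[OF setting iter] bregman_iteration_in_Uad[OF setting iter\<delta>]
    by blast+
  have "(L2_norm \<Omega> (\<lambda>x. u\<delta> i x - u i x))^2
      \<le> inner (S (u\<delta> i) - S (u i)) (mu_seq S \<alpha> z\<delta> u\<delta> i - mu_seq S \<alpha> z u i)"
    using U by (intro variational_inequalities_error_bound
        bregman_iteration_variational_inequality[OF S setting iter i]
        bregman_iteration_variational_inequality[OF S setting iter\<delta> i]) (auto simp: Uad_def)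
  then show "(L2_norm \<Omega> (\<lambda>x. u\<delta> i x - u i x))^2
      \<le> inner (S (u\<delta> i) - S (u i))
          (gamma_seq \<alpha> i *\<^sub>R (z\<delta> - z) - (\<Sum>j\<in>{1..i}. (1 / \<alpha> j) *\<^sub>R (S (u\<delta> j) - S (u j))))"
    by (simp only: mu_seq_diff)
qed

end
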